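(* Let $U=\{(\tau,R):\tau\in\mathbb{R}^d,\ R\in O(d),\ \|R-I_d\|_2<\sqrt2\}$. For $(\tau,R)\in U$, there is a unique real skew-symmetric matrix $B$ whose eigenvalues $\pm i\theta_j$ satisfy $|\theta_j|<\pi$ and $e^{B}=R$; moreover $\|B\|_2\le\pi/2$, the matrix $J(B):=\sum_{k\ge0}\frac{B^k}{(k+1)!}$ is invertible, and with $\tau_0':=J(B)^{-1}\tau$ one has \[ \|R-I_d\|_2+\|\tau\|_2\;\le\;\|B\|_2+\|\tau_0'\|_2\;\le\;\frac{\pi}{2}\bigl(\|R-I_d\|_2+\|\tau\|_2\bigr). \]
   Context: $\|\cdot\|_2$ denotes the Euclidean norm on vectors and the operator (spectral) norm on matrices. $O(d)$ is the orthogonal group. With the pair $(\tau,R)$ identified with the Euclidean motion $x\mapsto Rx+\tau$, one has $\exp$ of the Lie algebra element $(\tau_0',B)$ equal to $(J(B)\tau_0', e^B)$. *)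

theory Defs
  imports "HOL-Analysis.Analysis"
begin

definition opnorm2 :: "real^'n^'n \<Rightarrow> real" where
  "opnorm2 A = onorm (\<lambda>x. A *v x)"

definition mpow :: "real^'n^'n \<Rightarrow> nat \<Rightarrow> real^'n^'n" where
  "mpow A k = (((**) A) ^^ k) (mat 1)"

definition mexp :: "real^'n^'n \<Rightarrow> real^'n^'n" where
  "mexp A = (\<Sum>k. (1 / fact k) *\<^sub>R mpow A k)"

definition Jmat :: "real^'n^'n \<Rightarrow> real^'n^'n" where
  "Jmat B = (\<Sum>k. (1 / fact (k + 1)) *\<^sub>R mpow B k)"

definition skew_symmetric :: "real^'n^'n \<Rightarrow> bool" where
  "skew_symmetric B \<longleftrightarrow> transpose B = - B"

definition cmat :: "real^'n^'n \<Rightarrow> complex^'n^'n" where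
  "cmat A = (\<chi> i j. complex_of_real (A $ i $ j))"

definition is_eigenvalue :: "real^'n^'n \<Rightarrow> complex \<Rightarrow> bool" where
  "is_eigenvalue A z \<longleftrightarrow> det (cmat A - mat z) = 0"

end

(*
  Let C and K be the symmetric and skew-symmetric parts of the rotation R. On an orthonormal
  eigenbasis of C, with C v = cos t v, the matrix R rotates the plane spanned by v and K v by the
  angle t, and the hypothesis |R - I| < sqrt 2 forces t < pi/2. Replacing K by (t / sin t) K on each
  of these planes gives a skew-symmetric logarithm B = h(C) K of R, where h(cos t) = t / sin t, and
  |B| <= pi/2.

  Conversely, on each eigenspace of -B^2, with eigenvalue s^2, a skew-symmetric B acts as s times a
  complex structure, so every power series in B acts there as multiplication by its value at i s.
  For a logarithm with spectrum in the open disc of radius pi this pins down C = cos s and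
  K = sin s B / s on the eigenspace, hence B = h(C) K is unique. It also shows that R - I, B and J(B)
  act there with norms |exp(i s) - 1| = 2 sin (s/2), s and 2 sin (s/2) / s, which Jordan's
  inequality compares within the factor pi/2; as these operators commute with B^2, the comparisons
  on the eigenspaces add up to the stated bounds.
*)
theory Submission
  imports Defs
begin

lemma matrix_vector_mult_uminus: "(- A) *v x = - (A *v x)"
  for A :: "real^'n^'m"
  by (simp add: vec_eq_iff matrix_vector_mult_def sum_negf)

lemma inner_transpose_matrix_vector: "(transpose A *v x) \<bullet> y = x \<bullet> (A *v y)"
  for A :: "real^'n^'m"
  by (simp add: dot_lmul_matrix)

lemma inner_matrix_vector_symmetric:
  fixes A :: "real^'n^'n"
  assumes "transpose A = A"
  shows "(A *v x) \<bullet> y = x \<bullet> (A *v y)"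
  using inner_transpose_matrix_vector[of A x y] assms by (simp del: transpose_matrix_vector)

lemma skew_symmetric_inner:
  assumes "skew_symmetric B"
  shows "(B *v x) \<bullet> y = - (x \<bullet> (B *v y))"
  using inner_transpose_matrix_vector[of B x y] assms
  by (simp add: skew_symmetric_def matrix_vector_mult_uminus del: transpose_matrix_vector)

lemma skew_symmetric_inner_self: "skew_symmetric B \<Longrightarrow> x \<bullet> (B *v x) = 0"
  using skew_symmetric_inner[of B x x] by (simp add: inner_commute)

lemma norm_matrix_vector_le_opnorm2: "norm (A *v x) \<le> opnorm2 A * norm x"
  unfolding opnorm2_def by (rule onorm[OF matrix_vector_mul_bounded_linear])

lemma opnorm2_nonneg: "0 \<le> opnorm2 A"
  unfolding opnorm2_def by (rule onorm_pos_le[OF matrix_vector_mul_bounded_linear])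

lemma opnorm2_le: "0 \<le> b \<Longrightarrow> (\<And>x. norm (A *v x) \<le> b * norm x) \<Longrightarrow> opnorm2 A \<le> b"
  unfolding opnorm2_def by (rule onorm_bound)

lemma opnorm2_le_pointwise:
  assumes "0 \<le> c" "\<And>x. norm (A *v x) \<le> c * norm (A' *v x)"
  shows "opnorm2 A \<le> c * opnorm2 A'"
proof (rule opnorm2_le)
  show "0 \<le> c * opnorm2 A'" using assms(1) opnorm2_nonneg by (rule mult_nonneg_nonneg)
  fix x
  have "norm (A *v x) \<le> c * (opnorm2 A' * norm x)"
    using assms(2)[of x] mult_left_mono[OF norm_matrix_vector_le_opnorm2 assms(1)] by (rule order_trans)
  then show "norm (A *v x) \<le> c * opnorm2 A' * norm x" by (simp add: mult.assoc)
qed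

lemma opnorm2_mult_le: "opnorm2 (A ** A') \<le> opnorm2 A * opnorm2 A'"
  for A A' :: "real^'n^'n"
proof -
  have "(*v) (A ** A') = (*v) A \<circ> (*v) A'"
    by (auto simp: matrix_vector_mul_assoc)
  then show ?thesis
    unfolding opnorm2_def by (simp add: onorm_compose matrix_vector_mul_bounded_linear)
qed

lemma norm_le_opnorm2: "norm A \<le> real CARD('n) * real CARD('n) * opnorm2 A"
  for A :: "real^'n^'n"
proof -
  have "norm A \<le> (\<Sum>i\<in>UNIV. norm (A $ i))"
    unfolding norm_vec_def by (rule L2_set_le_sum) simp
  also have "\<dots> \<le> (\<Sum>i\<in>(UNIV::'n set). \<Sum>j\<in>(UNIV::'n set). \<bar>A $ i $ j\<bar>)"
    by (intro sum_mono norm_le_l1_cart)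
  also have "\<dots> \<le> (\<Sum>i\<in>(UNIV::'n set). \<Sum>j\<in>(UNIV::'n set). opnorm2 A)"
    unfolding opnorm2_def by (intro sum_mono matrix_component_le_onorm)
  finally show ?thesis by simp
qed

lemma matrix_inv_right:
  assumes "invertible A"
  shows "A ** matrix_inv A = mat 1"
proof -
  have "\<exists>A'. A ** A' = mat 1 \<and> A' ** A = mat 1" using assms unfolding invertible_def .
  then show ?thesis unfolding matrix_inv_def by (rule someI2_ex) simp
qed

lemma det_eq_0_iff_kernel: "det M = 0 \<longleftrightarrow> (\<exists>w. w \<noteq> 0 \<and> M *v w = 0)"
  for M :: "'a::field^'n^'n"
  by (metis invertible_det_nz invertible_left_inverse matrix_left_invertible_injective
      vec.inj_iff_eq_0 matrix_vector_mul_linear_gen)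

section \<open>The spectral theorem for real symmetric matrices\<close>

definition orthonormal_eigenbasis :: "real^'n^'n \<Rightarrow> (real^'n) set \<Rightarrow> bool" where
  "orthonormal_eigenbasis A T \<longleftrightarrow> finite T \<and> pairwise orthogonal T \<and> (\<forall>v\<in>T. norm v = 1) \<and>
     span T = UNIV \<and> (\<forall>v\<in>T. A *v v = (v \<bullet> (A *v v)) *\<^sub>R v)"

lemma linear_coeff_eq_0_of_nonneg:
  fixes a b :: real
  assumes "\<And>t. 0 \<le> a * t + b * t\<^sup>2"
  shows "a = 0"
proof (rule ccontr)
  assume "a \<noteq> 0"
  define t where "t = - a / (\<bar>b\<bar> + 1)"
  have "b * t\<^sup>2 \<le> \<bar>b\<bar> * t\<^sup>2" by (simp add: mult_right_mono)
  also have "\<bar>b\<bar> * t\<^sup>2 < (\<bar>b\<bar> + 1) * t\<^sup>2"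
    using \<open>a \<noteq> 0\<close> by (intro mult_strict_right_mono) (auto simp: t_def add_pos_nonneg)
  also have "(\<bar>b\<bar> + 1) * t\<^sup>2 = t * ((\<bar>b\<bar> + 1) * t)" by (simp add: power2_eq_square)
  also have "(\<bar>b\<bar> + 1) * t = - a" by (simp add: t_def add_pos_nonneg)
  finally show False using assms[of t] by (simp add: mult.commute)
qed

(* Moving v in the direction z = A v - m v would raise the Rayleigh quotient to first order
   unless z = 0. *)
lemma symmetric_rayleigh_max_eigenvector:
  fixes A :: "real^'n^'n"
  assumes sym: "transpose A = A" and S: "subspace S" and inv: "\<And>x. x \<in> S \<Longrightarrow> A *v x \<in> S"
    and v: "v \<in> S" "norm v = 1"
    and max: "\<And>w. w \<in> S \<Longrightarrow> norm w = 1 \<Longrightarrow> w \<bullet> (A *v w) \<le> v \<bullet> (A *v v)"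
  shows "A *v v = (v \<bullet> (A *v v)) *\<^sub>R v"
proof -
  define m where "m = v \<bullet> (A *v v)"
  have max': "w \<bullet> (A *v w) \<le> m * (w \<bullet> w)" if "w \<in> S" for w
  proof (cases "w = 0")
    case False
    have "(w /\<^sub>R norm w) \<bullet> (A *v (w /\<^sub>R norm w)) \<le> m"
      using max[of "w /\<^sub>R norm w"] that S False by (simp add: m_def subspace_scale)
    then show ?thesis
      using False
      by (simp add: matrix_vector_mult_scaleR power2_norm_eq_inner[symmetric] field_simps power2_eq_square)
  qed simp
  define z where "z = A *v v - m *\<^sub>R v"
  have "z \<in> S" unfolding z_def using inv v(1) S by (simp add: subspace_diff subspace_scale)
  have quadratic: "0 \<le> (- 2 * (z \<bullet> z)) * t + (m * (z \<bullet> z) - z \<bullet> (A *v z)) * t\<^sup>2" for t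
  proof -
    have "v + t *\<^sub>R z \<in> S" using \<open>z \<in> S\<close> v(1) S by (simp add: subspace_add subspace_scale)
    note le = max'[OF this]
    have Av: "A *v v = z + m *\<^sub>R v" by (simp add: z_def)
    have "(v + t *\<^sub>R z) \<bullet> (A *v (v + t *\<^sub>R z)) =
        v \<bullet> (A *v v) + t * (v \<bullet> (A *v z)) + t * (z \<bullet> (A *v v)) + t\<^sup>2 * (z \<bullet> (A *v z))"
      by (simp add: matrix_vector_right_distrib matrix_vector_mult_scaleR inner_add_left
          inner_add_right power2_eq_square distrib_left mult.assoc)
    also have "v \<bullet> (A *v z) = z \<bullet> (A *v v)"
      using inner_matrix_vector_symmetric[OF sym, of z v] by (simp add: inner_commute)
    also have "z \<bullet> (A *v v) = z \<bullet> z + m * (v \<bullet> z)"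
      unfolding Av by (simp add: inner_add_right inner_commute)
    finally have "(v + t *\<^sub>R z) \<bullet> (A *v (v + t *\<^sub>R z)) =
        m + 2 * t * (z \<bullet> z) + 2 * t * m * (v \<bullet> z) + t\<^sup>2 * (z \<bullet> (A *v z))"
      by (simp add: m_def algebra_simps)
    moreover have "(v + t *\<^sub>R z) \<bullet> (v + t *\<^sub>R z) = 1 + 2 * t * (v \<bullet> z) + t\<^sup>2 * (z \<bullet> z)"
      using v(2) by (simp add: inner_add_left inner_add_right inner_commute power2_eq_square norm_eq_1
          algebra_simps)
    ultimately show ?thesis using le by (simp add: algebra_simps)
  qed
  have "z \<bullet> z = 0" using linear_coeff_eq_0_of_nonneg[OF quadratic] by simp
  then show ?thesis by (simp add: z_def m_def)
qed

lemma symmetric_invariant_subspace_eigenvector: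
  fixes A :: "real^'n^'n"
  assumes sym: "transpose A = A" and S: "subspace S" and inv: "\<And>x. x \<in> S \<Longrightarrow> A *v x \<in> S"
    and x: "x \<in> S" "x \<noteq> 0"
  obtains v where "v \<in> S" "norm v = 1" "A *v v = (v \<bullet> (A *v v)) *\<^sub>R v"
proof -
  define K where "K = sphere 0 1 \<inter> S"
  have "compact K" unfolding K_def by (rule compact_Int_closed[OF compact_sphere closed_subspace[OF S]])
  moreover have "x /\<^sub>R norm x \<in> K" unfolding K_def using x S by (simp add: subspace_scale)
  moreover have "continuous_on K (\<lambda>w. w \<bullet> (A *v w))"
    by (intro continuous_intros linear_continuous_on matrix_vector_mul_bounded_linear)
  ultimately obtain v where "v \<in> K" and max: "\<And>w. w \<in> K \<Longrightarrow> w \<bullet> (A *v w) \<le> v \<bullet> (A *v v)"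
    using continuous_attains_sup[of K] by blast
  then have v: "v \<in> S" "norm v = 1" by (auto simp: K_def)
  moreover have "A *v v = (v \<bullet> (A *v v)) *\<^sub>R v"
    by (rule symmetric_rayleigh_max_eigenvector[OF sym S inv v]) (use max in \<open>auto simp: K_def\<close>)
  ultimately show ?thesis by (rule that)
qed

lemma symmetric_invariant_orthogonal_complement:
  fixes A :: "real^'n^'n"
  assumes sym: "transpose A = A" and S: "subspace S" and inv: "\<And>x. x \<in> S \<Longrightarrow> A *v x \<in> S"
    and v: "v \<in> S" "norm v = 1" "A *v v = c *\<^sub>R v"
  defines "S' \<equiv> S \<inter> {y. orthogonal v y}"
  shows "subspace S'" "\<And>y. y \<in> S' \<Longrightarrow> A *v y \<in> S'" "span (insert v S') = S" "dim S = Suc (dim S')"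
proof -
  show S': "subspace S'"
    unfolding S'_def using subspace_inter[OF S subspace_orthogonal_to_vector[of v]] by simp
  show "A *v y \<in> S'" if y: "y \<in> S'" for y
  proof -
    have "v \<bullet> (A *v y) = c * (v \<bullet> y)" using inner_matrix_vector_symmetric[OF sym, of v y] v(3) by simp
    then show ?thesis using y inv unfolding S'_def by (auto simp: orthogonal_def)
  qed
  show span: "span (insert v S') = S"
  proof
    show "span (insert v S') \<subseteq> S" using v(1) S by (intro span_minimal) (auto simp: S'_def)
    show "S \<subseteq> span (insert v S')"
    proof
      fix y assume y: "y \<in> S"
      have "y - (v \<bullet> y) *\<^sub>R v \<in> S'"
        unfolding S'_def using y v S
        by (auto simp: orthogonal_def inner_diff_right subspace_diff subspace_scale norm_eq_1)
      then have "(v \<bullet> y) *\<^sub>R v + (y - (v \<bullet> y) *\<^sub>R v) \<in> span (insert v S')"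
        by (intro span_add span_scale) (auto intro: span_base)
      then show "y \<in> span (insert v S')" by simp
    qed
  qed
  have "v \<notin> S'" using v(2) by (auto simp: S'_def orthogonal_def)
  then have "v \<notin> span S'" using S' by (metis span_eq_iff)
  then show "dim S = Suc (dim S')"
    using span dim_span[of "insert v S'"] dim_insert[of v S'] by simp
qed

lemma invariant_subspace_orthonormal_eigenbasis:
  fixes A :: "real^'n^'n"
  assumes sym: "transpose A = A"
  shows "subspace S \<Longrightarrow> (\<And>x. x \<in> S \<Longrightarrow> A *v x \<in> S) \<Longrightarrow>
    \<exists>T. T \<subseteq> S \<and> pairwise orthogonal T \<and> (\<forall>v\<in>T. norm v = 1 \<and> A *v v = (v \<bullet> (A *v v)) *\<^sub>R v) \<and>
      span T = S"
proof (induction "dim S" arbitrary: S)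
  case 0
  then have "S = {0}" using subspace_0 by (auto simp: dim_eq_0)
  then show ?case by (intro exI[of _ "{}"]) auto
next
  case (Suc k)
  obtain x where "x \<in> S" "x \<noteq> 0" using Suc.hyps(2)[symmetric] dim_eq_0[of S] by auto
  then obtain v where v: "v \<in> S" "norm v = 1" "A *v v = (v \<bullet> (A *v v)) *\<^sub>R v"
    using symmetric_invariant_subspace_eigenvector[OF sym Suc.prems] by blast
  define S' where "S' = S \<inter> {y. orthogonal v y}"
  note S' = symmetric_invariant_orthogonal_complement[OF sym Suc.prems v, folded S'_def]
  obtain T' where T': "T' \<subseteq> S'" "pairwise orthogonal T'"
      "\<forall>w\<in>T'. norm w = 1 \<and> A *v w = (w \<bullet> (A *v w)) *\<^sub>R w" "span T' = S'"
    using Suc.hyps(1)[OF _ S'(1,2)] Suc.hyps(2) S'(4) by auto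
  show ?case
  proof (intro exI[of _ "insert v T'"] conjI)
    show "insert v T' \<subseteq> S" using T'(1) v(1) unfolding S'_def by auto
    show "pairwise orthogonal (insert v T')"
      using T'(1,2) unfolding pairwise_insert S'_def by (auto simp: orthogonal_commute)
    show "\<forall>w\<in>insert v T'. norm w = 1 \<and> A *v w = (w \<bullet> (A *v w)) *\<^sub>R w"
      using T'(3) v by auto
    have "span (insert v T') = span (insert v S')"
      unfolding span_insert T'(4) using S'(1) by (metis span_eq_iff)
    then show "span (insert v T') = S" using S'(3) by simp
  qed
qed

theorem symmetric_matrix_orthonormal_eigenbasis:
  fixes A :: "real^'n^'n"
  assumes "transpose A = A"
  obtains T where "orthonormal_eigenbasis A T"
proof -
  obtain T where T: "pairwise orthogonal T" "\<forall>v\<in>T. norm v = 1 \<and> A *v v = (v \<bullet> (A *v v)) *\<^sub>R v"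
      "span T = UNIV"
    using invariant_subspace_orthonormal_eigenbasis[OF assms subspace_UNIV] by auto
  have "independent T" using T(1,2) pairwise_orthogonal_independent by fastforce
  then have "finite T" using finiteI_independent by blast
  then show ?thesis using that T unfolding orthonormal_eigenbasis_def by blast
qed

lemma orthonormal_eigenbasis_expand:
  assumes "orthonormal_eigenbasis A T"
  shows "(\<Sum>v\<in>T. (x \<bullet> v) *\<^sub>R v) = x"
  using assms orthonormal_basis_expand[of T x] by (simp add: orthonormal_eigenbasis_def)

lemma orthonormal_eigenbasis_matrix_eq:
  assumes "orthonormal_eigenbasis A T" "\<And>v. v \<in> T \<Longrightarrow> M *v v = M' *v v"
  shows "M = M'"
proof -
  have "M *v x = M' *v x" for x
  proof -
    have "M *v x = M *v (\<Sum>v\<in>T. (x \<bullet> v) *\<^sub>R v)" using orthonormal_eigenbasis_expand[OF assms(1)] by simp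
    also have "\<dots> = (\<Sum>v\<in>T. (x \<bullet> v) *\<^sub>R (M' *v v))"
      using assms(2) by (simp add: vec.sum matrix_vector_mult_scaleR)
    also have "\<dots> = M' *v (\<Sum>v\<in>T. (x \<bullet> v) *\<^sub>R v)" by (simp add: vec.sum matrix_vector_mult_scaleR)
    also have "\<dots> = M' *v x" using orthonormal_eigenbasis_expand[OF assms(1)] by simp
    finally show ?thesis .
  qed
  then show ?thesis by (simp add: matrix_eq)
qed

lemma symmetric_eigenvectors_orthogonal:
  fixes A :: "real^'n^'n"
  assumes "transpose A = A" "A *v y = \<mu> *\<^sub>R y" "A *v z = \<nu> *\<^sub>R z" "\<mu> \<noteq> \<nu>"
  shows "y \<bullet> z = 0"
proof -
  have "\<mu> * (y \<bullet> z) = (A *v y) \<bullet> z" using assms(2) by simp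
  also have "\<dots> = y \<bullet> (A *v z)" by (rule inner_matrix_vector_symmetric[OF assms(1)])
  also have "\<dots> = \<nu> * (y \<bullet> z)" using assms(3) by simp
  finally show ?thesis using assms(4) by simp
qed

lemma symmetric_eigenspace_decomposition:
  fixes A :: "real^'n^'n"
  assumes "transpose A = A"
  obtains M y where "finite M" "x = (\<Sum>\<mu>\<in>M. y \<mu>)" "\<And>\<mu>. \<mu> \<in> M \<Longrightarrow> A *v y \<mu> = \<mu> *\<^sub>R y \<mu>"
proof -
  obtain T where T: "orthonormal_eigenbasis A T"
    using symmetric_matrix_orthonormal_eigenbasis[OF assms] .
  define ev where "ev v = v \<bullet> (A *v v)" for v
  define y where "y \<mu> = (\<Sum>v\<in>{v\<in>T. ev v = \<mu>}. (x \<bullet> v) *\<^sub>R v)" for \<mu>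
  have fin: "finite T" using T by (simp add: orthonormal_eigenbasis_def)
  have "x = (\<Sum>v\<in>T. (x \<bullet> v) *\<^sub>R v)" using orthonormal_eigenbasis_expand[OF T] by simp
  also have "\<dots> = (\<Sum>\<mu>\<in>ev ` T. y \<mu>)" unfolding y_def by (rule sum.group[symmetric]) (use fin in auto)
  finally have "x = (\<Sum>\<mu>\<in>ev ` T. y \<mu>)" .
  moreover have "A *v y \<mu> = \<mu> *\<^sub>R y \<mu>" for \<mu>
  proof -
    have Av: "A *v v = ev v *\<^sub>R v" if "v \<in> T" for v
      using T that by (simp add: orthonormal_eigenbasis_def ev_def)
    have "A *v y \<mu> = (\<Sum>v\<in>{v\<in>T. ev v = \<mu>}. (x \<bullet> v) *\<^sub>R (A *v v))"
      unfolding y_def by (simp add: vec.sum matrix_vector_mult_scaleR)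
    also have "\<dots> = (\<Sum>v\<in>{v\<in>T. ev v = \<mu>}. \<mu> *\<^sub>R ((x \<bullet> v) *\<^sub>R v))"
      by (intro sum.cong) (auto simp: Av)
    finally show ?thesis by (simp add: y_def scaleR_sum_right)
  qed
  ultimately show ?thesis using that fin by blast
qed

(* F and G preserve the mutually orthogonal eigenspaces of P, so the inequalities on the
   eigenspaces add up by Pythagoras. *)
lemma norm_le_of_commuting_symmetric:
  fixes P F G :: "real^'n^'n"
  assumes sym: "transpose P = P" and c: "0 \<le> c"
    and F: "\<And>x. F *v (P *v x) = P *v (F *v x)" and G: "\<And>x. G *v (P *v x) = P *v (G *v x)"
    and eigen: "\<And>y \<mu>. P *v y = \<mu> *\<^sub>R y \<Longrightarrow> norm (F *v y) \<le> c * norm (G *v y)"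
  shows "norm (F *v x) \<le> c * norm (G *v x)"
proof -
  obtain M y where M: "finite M" "x = (\<Sum>\<mu>\<in>M. y \<mu>)" "\<And>\<mu>. \<mu> \<in> M \<Longrightarrow> P *v y \<mu> = \<mu> *\<^sub>R y \<mu>"
    using symmetric_eigenspace_decomposition[OF sym] by blast
  have orth: "pairwise (\<lambda>\<mu> \<nu>. orthogonal (Q *v y \<mu>) (Q *v y \<nu>)) M"
    if Q: "\<And>x. Q *v (P *v x) = P *v (Q *v x)" for Q :: "real^'n^'n"
  proof (unfold pairwise_def orthogonal_def, intro ballI impI)
    fix \<mu> \<nu> assume "\<mu> \<in> M" "\<nu> \<in> M" "\<mu> \<noteq> \<nu>"
    moreover have "P *v (Q *v y \<mu>) = \<mu> *\<^sub>R (Q *v y \<mu>)" if "\<mu> \<in> M" for \<mu>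
      using Q[of "y \<mu>"] M(3)[OF that] by (simp add: matrix_vector_mult_scaleR)
    ultimately show "(Q *v y \<mu>) \<bullet> (Q *v y \<nu>) = 0" by (intro symmetric_eigenvectors_orthogonal[OF sym])
  qed
  have "(norm (F *v x))\<^sup>2 = (\<Sum>\<mu>\<in>M. (norm (F *v y \<mu>))\<^sup>2)"
    unfolding M(2) vec.sum by (rule norm_sum_Pythagorean[OF M(1) orth[OF F]])
  also have "\<dots> \<le> (\<Sum>\<mu>\<in>M. (c * norm (G *v y \<mu>))\<^sup>2)"
    using eigen M(3) by (intro sum_mono power_mono) auto
  also have "\<dots> = c\<^sup>2 * (\<Sum>\<mu>\<in>M. (norm (G *v y \<mu>))\<^sup>2)"
    by (simp add: power_mult_distrib sum_distrib_left)
  also have "(\<Sum>\<mu>\<in>M. (norm (G *v y \<mu>))\<^sup>2) = (norm (G *v x))\<^sup>2"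
    unfolding M(2) vec.sum by (rule norm_sum_Pythagorean[OF M(1) orth[OF G], symmetric])
  finally have "(norm (F *v x))\<^sup>2 \<le> (c * norm (G *v x))\<^sup>2" by (simp add: power_mult_distrib)
  then show ?thesis by (rule power2_le_imp_le) (simp add: c)
qed

(* The matrix sum_{v in T} f(lambda_v) v v^T, which is f(A) when T is an orthonormal eigenbasis of A
   with eigenvalues lambda_v. *)
definition spectral_fun :: "(real \<Rightarrow> real) \<Rightarrow> real^'n^'n \<Rightarrow> (real^'n) set \<Rightarrow> real^'n^'n" where
  "spectral_fun f A T = (\<chi> i j. \<Sum>v\<in>T. f (v \<bullet> (A *v v)) * v $ i * v $ j)"

lemma spectral_fun_apply:
  "spectral_fun f A T *v x = (\<Sum>v\<in>T. (f (v \<bullet> (A *v v)) * (v \<bullet> x)) *\<^sub>R v)"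
proof -
  have "(spectral_fun f A T *v x) $ i = (\<Sum>v\<in>T. (f (v \<bullet> (A *v v)) * (v \<bullet> x)) *\<^sub>R v) $ i" for i
  proof -
    have "(spectral_fun f A T *v x) $ i = (\<Sum>j\<in>UNIV. \<Sum>v\<in>T. f (v \<bullet> (A *v v)) * v $ i * v $ j * x $ j)"
      by (simp add: spectral_fun_def matrix_vector_mult_def sum_distrib_right)
    also have "\<dots> = (\<Sum>v\<in>T. \<Sum>j\<in>UNIV. f (v \<bullet> (A *v v)) * v $ i * v $ j * x $ j)"
      by (rule sum.swap)
    also have "\<dots> = (\<Sum>v\<in>T. (f (v \<bullet> (A *v v)) * (v \<bullet> x)) * v $ i)"
      by (simp add: inner_vec_def sum_distrib_left sum_distrib_right mult_ac)
    finally show ?thesis by (simp add: sum_component)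
  qed
  then show ?thesis by (simp add: vec_eq_iff)
qed

lemma transpose_spectral_fun: "transpose (spectral_fun f A T) = spectral_fun f A T"
  by (simp add: spectral_fun_def transpose_def vec_eq_iff mult_ac)

lemma spectral_fun_eigenvector:
  assumes T: "orthonormal_eigenbasis A T" and sym: "transpose A = A" and w: "A *v w = c *\<^sub>R w"
  shows "spectral_fun f A T *v w = f c *\<^sub>R w"
proof -
  have "(f (v \<bullet> (A *v v)) * (v \<bullet> w)) *\<^sub>R v = f c *\<^sub>R ((w \<bullet> v) *\<^sub>R v)" if "v \<in> T" for v
  proof (cases "v \<bullet> (A *v v) = c")
    case False
    have "A *v v = (v \<bullet> (A *v v)) *\<^sub>R v" using T that by (simp add: orthonormal_eigenbasis_def)
    then have "v \<bullet> w = 0" using symmetric_eigenvectors_orthogonal[OF sym _ w False] by blast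
    then show ?thesis by (simp add: inner_commute)
  qed (simp add: inner_commute)
  then have "spectral_fun f A T *v w = (\<Sum>v\<in>T. f c *\<^sub>R ((w \<bullet> v) *\<^sub>R v))"
    unfolding spectral_fun_apply by (rule sum.cong[OF refl])
  also have "\<dots> = f c *\<^sub>R w"
    by (simp only: scaleR_sum_right[symmetric] orthonormal_eigenbasis_expand[OF T])
  finally show ?thesis .
qed

lemma norm_spectral_fun_le:
  assumes T: "orthonormal_eigenbasis A T" and f: "\<And>v. v \<in> T \<Longrightarrow> \<bar>f (v \<bullet> (A *v v))\<bar> \<le> b"
  shows "norm (spectral_fun f A T *v x) \<le> b * norm x"
proof -
  have fin: "finite T" and orth: "pairwise orthogonal T" and unit: "\<And>v. v \<in> T \<Longrightarrow> norm v = 1"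
    using T by (auto simp: orthonormal_eigenbasis_def)
  have pyth: "(norm (\<Sum>v\<in>T. a v *\<^sub>R v))\<^sup>2 = (\<Sum>v\<in>T. (a v)\<^sup>2)" for a
  proof -
    have "pairwise (\<lambda>v w. orthogonal (a v *\<^sub>R v) (a w *\<^sub>R w)) T"
      using orth by (auto simp: pairwise_def orthogonal_clauses)
    then show ?thesis using unit by (simp add: norm_sum_Pythagorean[OF fin] power_mult_distrib)
  qed
  show ?thesis
  proof (cases "x = 0")
    case False
    have "T \<noteq> {}"
    proof
      assume "T = {}"
      moreover have "x \<in> span T" using T by (simp add: orthonormal_eigenbasis_def)
      ultimately show False using False by simp
    qed
    then have b: "0 \<le> b" using f by (meson abs_ge_zero all_not_in_conv order_trans)
    have "(f (v \<bullet> (A *v v)) * (v \<bullet> x))\<^sup>2 \<le> (b * (x \<bullet> v))\<^sup>2" if "v \<in> T" for v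
    proof -
      have "\<bar>f (v \<bullet> (A *v v)) * (v \<bullet> x)\<bar> \<le> \<bar>b * (x \<bullet> v)\<bar>"
        using f[OF that] b by (simp add: abs_mult inner_commute mult_right_mono)
      then show ?thesis by (simp only: abs_le_square_iff)
    qed
    then have "(norm (spectral_fun f A T *v x))\<^sup>2 \<le> (\<Sum>v\<in>T. (b * (x \<bullet> v))\<^sup>2)"
      unfolding spectral_fun_apply pyth by (rule sum_mono)
    also have "\<dots> = (b * norm x)\<^sup>2"
      using pyth[of "\<lambda>v. x \<bullet> v"]
      by (simp add: orthonormal_eigenbasis_expand[OF T] power_mult_distrib sum_distrib_left)
    finally show ?thesis by (rule power2_le_imp_le) (simp add: b)
  qed simp
qed

section \<open>Matrix power series\<close>

lemma mpow_0 [simp]: "mpow A 0 = mat 1"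
  by (simp add: mpow_def)

lemma mpow_Suc: "mpow A (Suc k) = A ** mpow A k"
  by (simp add: mpow_def)

lemma mpow_Suc_apply: "mpow A (Suc k) *v x = A *v (mpow A k *v x)"
  by (simp add: mpow_Suc matrix_vector_mul_assoc)

lemma mpow_apply_commute: "mpow A k *v (A *v x) = A *v (mpow A k *v x)"
  by (induction k) (simp_all add: mpow_Suc_apply)

lemma opnorm2_mpow_le: "opnorm2 (mpow A k) \<le> opnorm2 A ^ k"
proof (induction k)
  case 0
  show ?case by (simp add: opnorm2_def onorm_id_le)
next
  case (Suc k)
  have "opnorm2 (mpow A (Suc k)) \<le> opnorm2 A * opnorm2 (mpow A k)"
    unfolding mpow_Suc by (rule opnorm2_mult_le)
  also have "\<dots> \<le> opnorm2 A * opnorm2 A ^ k"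
    by (rule mult_left_mono[OF Suc.IH opnorm2_nonneg])
  finally show ?case by simp
qed

lemma summable_matrix_power_series:
  fixes A :: "real^'n^'n"
  assumes c: "\<And>k. \<bar>c k\<bar> \<le> 1 / fact k"
  shows "summable (\<lambda>k. c k *\<^sub>R mpow A k)"
proof (rule summable_comparison_test'[where N = 0])
  let ?N = "real CARD('n) * real CARD('n)"
  show "summable (\<lambda>k. ?N * (inverse (fact k) * opnorm2 A ^ k))"
    by (intro summable_mult summable_exp)
  show "norm (c k *\<^sub>R mpow A k) \<le> ?N * (inverse (fact k) * opnorm2 A ^ k)" for k
  proof -
    have "norm (c k *\<^sub>R mpow A k) = \<bar>c k\<bar> * norm (mpow A k)" by simp
    also have "\<dots> \<le> (1 / fact k) * (?N * opnorm2 A ^ k)"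
      using norm_le_opnorm2[of "mpow A k"] opnorm2_mpow_le[of A k]
      by (intro mult_mono c) (auto intro: order_trans mult_left_mono)
    finally show ?thesis by (simp add: field_simps)
  qed
qed

lemma matrix_power_series_apply:
  fixes A :: "real^'n^'n"
  assumes "summable (\<lambda>k. c k *\<^sub>R mpow A k)"
  shows "(\<Sum>k. c k *\<^sub>R mpow A k) *v x = (\<Sum>k. c k *\<^sub>R (mpow A k *v x))"
    and "summable (\<lambda>k. c k *\<^sub>R (mpow A k *v x))"
proof -
  have "linear (\<lambda>M::real^'n^'n. M *v x)"
    by (intro linearI) (simp_all add: matrix_vector_mult_add_rdistrib scaleR_matrix_vector_assoc)
  then have bl: "bounded_linear (\<lambda>M::real^'n^'n. M *v x)"
    by (simp add: linear_conv_bounded_linear)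
  show "(\<Sum>k. c k *\<^sub>R mpow A k) *v x = (\<Sum>k. c k *\<^sub>R (mpow A k *v x))"
    using bounded_linear.suminf[OF bl assms] by (simp add: scaleR_matrix_vector_assoc)
  show "summable (\<lambda>k. c k *\<^sub>R (mpow A k *v x))"
    using bounded_linear.summable[OF bl assms] by (simp add: scaleR_matrix_vector_assoc)
qed

lemma matrix_power_series_apply_commute:
  fixes A :: "real^'n^'n"
  assumes "summable (\<lambda>k. c k *\<^sub>R mpow A k)"
  shows "(\<Sum>k. c k *\<^sub>R mpow A k) *v (A *v x) = A *v ((\<Sum>k. c k *\<^sub>R mpow A k) *v x)"
proof -
  have "(\<Sum>k. c k *\<^sub>R mpow A k) *v (A *v x) = (\<Sum>k. A *v (c k *\<^sub>R (mpow A k *v x)))"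
    by (simp add: matrix_power_series_apply[OF assms] mpow_apply_commute matrix_vector_mult_scaleR)
  also have "\<dots> = A *v (\<Sum>k. c k *\<^sub>R (mpow A k *v x))"
    by (rule bounded_linear.suminf[OF matrix_vector_mul_bounded_linear
          matrix_power_series_apply(2)[OF assms], symmetric])
  finally show ?thesis by (simp add: matrix_power_series_apply[OF assms])
qed

lemma summable_mexp: "summable (\<lambda>k. (1 / fact k) *\<^sub>R mpow A k)"
  by (rule summable_matrix_power_series) simp

lemma summable_Jmat: "summable (\<lambda>k. (1 / fact (k + 1)) *\<^sub>R mpow A k)"
  by (rule summable_matrix_power_series) (simp add: fact_mono divide_simps del: fact_Suc)

lemma mexp_apply_commute: "mexp A *v (A *v x) = A *v (mexp A *v x)"
  unfolding mexp_def by (rule matrix_power_series_apply_commute[OF summable_mexp])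

lemma Jmat_apply_commute: "Jmat A *v (A *v x) = A *v (Jmat A *v x)"
  unfolding Jmat_def by (rule matrix_power_series_apply_commute[OF summable_Jmat])

definition exprel :: "complex \<Rightarrow> complex" where
  "exprel z = (if z = 0 then 1 else (exp z - 1) / z)"

lemma exp_coeff_sums: "(\<lambda>k. complex_of_real (1 / fact k) * z ^ k) sums exp z"
  using exp_converges[of z] by (simp add: scaleR_conv_of_real divide_inverse mult.commute)

lemma exprel_coeff_sums: "(\<lambda>k. complex_of_real (1 / fact (k + 1)) * z ^ k) sums exprel z"
proof (cases "z = 0")
  case True
  then show ?thesis
    using powser_sums_zero[of "\<lambda>k. complex_of_real (1 / fact (k + 1))"] by (simp add: exprel_def)
next
  case False
  have "(\<lambda>k. z ^ Suc k /\<^sub>R fact (Suc k)) sums (exp z - 1)"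
    using exp_converges[of z] sums_Suc_iff[of "\<lambda>k. z ^ k /\<^sub>R fact k"] by simp
  then have "(\<lambda>k. z ^ Suc k /\<^sub>R fact (Suc k) / z) sums ((exp z - 1) / z)"
    by (rule sums_divide)
  moreover have "(\<lambda>k. z ^ Suc k /\<^sub>R fact (Suc k) / z) = (\<lambda>k. complex_of_real (1 / fact (k + 1)) * z ^ k)"
    using False by (intro ext) (simp add: scaleR_conv_of_real divide_inverse del: fact_Suc)
  ultimately show ?thesis using False by (simp add: exprel_def)
qed

lemma mpow_rotation_pair:
  assumes "A *v y = s *\<^sub>R u" "A *v u = (- s) *\<^sub>R y"
  shows "mpow A k *v y = Re ((\<i> * of_real s) ^ k) *\<^sub>R y + Im ((\<i> * of_real s) ^ k) *\<^sub>R u"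
  by (induction k)
    (simp_all add: mpow_Suc_apply matrix_vector_right_distrib matrix_vector_mult_scaleR assms algebra_simps)

lemma matrix_power_series_rotation_pair:
  assumes rot: "A *v y = s *\<^sub>R u" "A *v u = (- s) *\<^sub>R y"
    and sm: "summable (\<lambda>k. c k *\<^sub>R mpow A k)"
    and w: "(\<lambda>k. of_real (c k) * (\<i> * of_real s) ^ k) sums w"
  shows "(\<Sum>k. c k *\<^sub>R mpow A k) *v y = Re w *\<^sub>R y + Im w *\<^sub>R u"
proof -
  have "(\<lambda>k. Re (of_real (c k) * (\<i> * of_real s) ^ k) *\<^sub>R y
      + Im (of_real (c k) * (\<i> * of_real s) ^ k) *\<^sub>R u) sums (Re w *\<^sub>R y + Im w *\<^sub>R u)"
    by (intro sums_add sums_scaleR_left sums_Re sums_Im w)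
  then have "(\<lambda>k. c k *\<^sub>R (mpow A k *v y)) sums (Re w *\<^sub>R y + Im w *\<^sub>R u)"
    by (simp add: mpow_rotation_pair[OF rot] scaleR_add_right)
  then show ?thesis by (simp add: matrix_power_series_apply[OF sm] sums_iff)
qed

lemma mexp_rotation_pair:
  assumes "A *v y = s *\<^sub>R u" "A *v u = (- s) *\<^sub>R y"
  shows "mexp A *v y = cos s *\<^sub>R y + sin s *\<^sub>R u"
  using matrix_power_series_rotation_pair[OF assms summable_mexp exp_coeff_sums]
  by (simp add: mexp_def exp_Euler cos_of_real sin_of_real)

lemma Jmat_rotation_pair:
  assumes "A *v y = s *\<^sub>R u" "A *v u = (- s) *\<^sub>R y"
  shows "Jmat A *v y = Re (exprel (\<i> * of_real s)) *\<^sub>R y + Im (exprel (\<i> * of_real s)) *\<^sub>R u"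
  unfolding Jmat_def by (rule matrix_power_series_rotation_pair[OF assms summable_Jmat exprel_coeff_sums])

section \<open>Complex eigenvalues of real matrices\<close>

lemma cmat_mult_vector_nth:
  "(cmat A *v w) $ i = Complex ((A *v (\<chi> j. Re (w $ j))) $ i) ((A *v (\<chi> j. Im (w $ j))) $ i)"
  by (simp add: cmat_def matrix_vector_mult_def complex_eq_iff Re_sum Im_sum)

lemma mat_mult_vector_nth: "(mat z *v w) $ i = z * w $ i"
  for w :: "'a::comm_ring_1^'n"
  by (simp add: matrix_vector_mult_def mat_def if_distrib if_distribR cong: if_cong)

lemma is_eigenvalue_rotation_pair:
  fixes A :: "real^'n^'n"
  assumes "A *v y = s *\<^sub>R u" "A *v u = (- s) *\<^sub>R y" "y \<noteq> 0"
  shows "is_eigenvalue A (\<i> * of_real s)"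
proof -
  define w :: "complex^'n" where "w = (\<chi> i. Complex (y $ i) (- (u $ i)))"
  have re: "(\<chi> j. Re (w $ j)) = y" and im: "(\<chi> j. Im (w $ j)) = - u"
    by (simp_all add: w_def vec_eq_iff)
  have "(cmat A *v w) $ i = (mat (\<i> * of_real s) *v w) $ i" for i
    unfolding cmat_mult_vector_nth re im mat_mult_vector_nth
    by (simp add: assms(1,2) vec.neg w_def complex_eq_iff)
  then have "(cmat A - mat (\<i> * of_real s)) *v w = 0"
    by (simp add: matrix_vector_mult_diff_rdistrib vec_eq_iff)
  moreover have "w \<noteq> 0"
  proof
    assume "w = 0"
    then have "(\<chi> j. Re (w $ j)) = 0" by (simp add: vec_eq_iff)
    with re assms(3) show False by simp
  qed
  ultimately show ?thesis unfolding is_eigenvalue_def det_eq_0_iff_kernel by blast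
qed

lemma norm_vec_squared: "(norm x)\<^sup>2 = (\<Sum>i\<in>UNIV. (x $ i)\<^sup>2)"
  for x :: "real^'n"
  by (simp only: power2_norm_eq_inner) (simp add: inner_vec_def power2_eq_square)

lemma is_eigenvalue_cmod_le_opnorm2:
  assumes "is_eigenvalue A z"
  shows "cmod z \<le> opnorm2 A"
proof -
  obtain w where w: "(cmat A - mat z) *v w = 0" "w \<noteq> 0"
    using assms det_eq_0_iff_kernel unfolding is_eigenvalue_def by blast
  define a where "a = (\<chi> j. Re (w $ j))"
  define c where "c = (\<chi> j. Im (w $ j))"
  have Aw: "Complex ((A *v a) $ i) ((A *v c) $ i) = z * w $ i" for i
  proof -
    have "(cmat A *v w) $ i = (mat z *v w) $ i"
      using w(1) by (simp add: matrix_vector_mult_diff_rdistrib vec_eq_iff)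
    then show ?thesis unfolding cmat_mult_vector_nth a_def c_def mat_mult_vector_nth .
  qed
  define W where "W = (\<Sum>i\<in>UNIV. (cmod (w $ i))\<^sup>2)"
  have W: "W = (norm a)\<^sup>2 + (norm c)\<^sup>2"
    by (simp add: W_def norm_vec_squared a_def c_def cmod_power2 sum.distrib)
  have "(cmod z)\<^sup>2 * W = (\<Sum>i\<in>UNIV. (cmod (z * w $ i))\<^sup>2)"
    by (simp add: W_def sum_distrib_left norm_mult power_mult_distrib)
  also have "\<dots> = (norm (A *v a))\<^sup>2 + (norm (A *v c))\<^sup>2"
    unfolding Aw[symmetric] by (simp add: norm_vec_squared cmod_power2 sum.distrib)
  also have "\<dots> \<le> (opnorm2 A * norm a)\<^sup>2 + (opnorm2 A * norm c)\<^sup>2"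
    by (intro add_mono power_mono norm_matrix_vector_le_opnorm2) auto
  also have "\<dots> = (opnorm2 A)\<^sup>2 * W"
    unfolding W by (simp add: power_mult_distrib algebra_simps)
  finally have le: "(cmod z)\<^sup>2 * W \<le> (opnorm2 A)\<^sup>2 * W" .
  obtain i where "w $ i \<noteq> 0" using w(2) by (auto simp: vec_eq_iff)
  then have "0 < W" unfolding W_def by (intro sum_pos2[where i=i]) auto
  then have "(cmod z)\<^sup>2 \<le> (opnorm2 A)\<^sup>2" using le by simp
  then show ?thesis by (rule power2_le_imp_le[OF _ opnorm2_nonneg])
qed

lemma mult_cos_le_sin:
  assumes "0 \<le> x" "x \<le> pi"
  shows "x * cos x \<le> sin x"
proof -
  have "(\<lambda>t. sin t - t * cos t) 0 \<le> (\<lambda>t. sin t - t * cos t) x"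
  proof (rule DERIV_nonneg_imp_nondecreasing[OF assms(1)])
    fix t assume "0 \<le> t" "t \<le> x"
    then have "0 \<le> t * sin t" using assms by (intro mult_nonneg_nonneg sin_ge_zero) auto
    moreover have "((\<lambda>t. sin t - t * cos t) has_real_derivative (t * sin t)) (at t)"
      by (auto intro!: derivative_eq_intros simp: algebra_simps)
    ultimately show "\<exists>y. ((\<lambda>t. sin t - t * cos t) has_real_derivative y) (at t) \<and> 0 \<le> y" by blast
  qed
  then show ?thesis by simp
qed

theorem Jordan_inequality:
  assumes "0 \<le> x" "x \<le> pi / 2"
  shows "2 / pi * x \<le> sin x"
proof (cases "x = 0")
  case False
  then have x: "0 < x" using assms by simp
  have "(\<lambda>t. sin t / t) (pi / 2) \<le> (\<lambda>t. sin t / t) x"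
  proof (rule DERIV_nonpos_imp_nonincreasing[OF assms(2)])
    fix t assume t: "x \<le> t" "t \<le> pi / 2"
    then have "t \<noteq> 0" using x by simp
    then have "((\<lambda>t. sin t / t) has_real_derivative (t * cos t - sin t) / t\<^sup>2) (at t)"
      by (auto intro!: derivative_eq_intros simp: power2_eq_square)
    moreover have "(t * cos t - sin t) / t\<^sup>2 \<le> 0"
      using mult_cos_le_sin[of t] t x by (intro divide_nonpos_nonneg) auto
    ultimately show "\<exists>y. ((\<lambda>t. sin t / t) has_real_derivative y) (at t) \<and> y \<le> 0" by blast
  qed
  then show ?thesis using x by (simp add: field_simps)
qed simp

lemma norm_exp_i_minus_1_le: "cmod (exp (\<i> * of_real s) - 1) \<le> \<bar>s\<bar>"
  using abs_sin_x_le_abs_x[of "s / 2"] by (simp add: dist_exp_i_1)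

lemma norm_exp_i_minus_1_ge:
  assumes "0 \<le> s" "s \<le> pi"
  shows "s \<le> pi / 2 * cmod (exp (\<i> * of_real s) - 1)"
  using Jordan_inequality[of "s / 2"] assms sin_ge_zero[of "s / 2"]
  by (simp add: dist_exp_i_1 field_simps)

lemma norm_exprel_i:
  assumes "s \<noteq> 0"
  shows "cmod (exprel (\<i> * of_real s)) = cmod (exp (\<i> * of_real s) - 1) / \<bar>s\<bar>"
  using assms by (simp add: exprel_def norm_divide norm_mult)

lemma norm_exprel_i_le_1: "cmod (exprel (\<i> * of_real s)) \<le> 1"
  using norm_exp_i_minus_1_le[of s]
  by (cases "s = 0") (simp add: exprel_def, simp add: norm_exprel_i divide_le_eq_1)

lemma norm_exprel_i_ge:
  assumes "0 \<le> s" "s \<le> pi"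
  shows "1 \<le> pi / 2 * cmod (exprel (\<i> * of_real s))"
proof (cases "s = 0")
  case False
  then show ?thesis
    using norm_exp_i_minus_1_ge[OF assms] assms by (simp add: norm_exprel_i field_simps)
qed (simp add: exprel_def pi_ge_two)

(* t / sin t for c = cos t with 0 <= t <= pi. At c = 1 the division by zero gives 0 instead of the
   limit 1, which is harmless below because there the factor multiplies skew_part R *v v = 0. *)
definition arccos_over_sin :: "real \<Rightarrow> real" where
  "arccos_over_sin c = arccos c / sqrt (1 - c\<^sup>2)"

lemma arccos_over_sin_cos:
  assumes "0 \<le> s" "s < pi"
  shows "arccos_over_sin (cos s) * sin s = s"
proof (cases "s = 0")
  case False
  then have "0 < sin s" using assms by (intro sin_gt_zero) auto
  moreover have "arccos (cos s) = s" using assms by (intro arccos_cos) auto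
  ultimately show ?thesis using sin_cos_sqrt[of s] by (simp add: arccos_over_sin_def)
qed (simp add: arccos_over_sin_def)

lemma arccos_over_sin_bounds:
  assumes "0 \<le> c" "c \<le> 1"
  shows "0 \<le> arccos_over_sin c" "arccos_over_sin c \<le> pi / 2"
proof -
  define \<theta> where "\<theta> = arccos c"
  have \<theta>: "0 \<le> \<theta>" "\<theta> \<le> pi / 2" "cos \<theta> = c"
    using assms arccos_le_pi2[of c] by (auto simp: \<theta>_def intro: arccos_lbound)
  have sin: "sqrt (1 - c\<^sup>2) = sin \<theta>"
    using \<theta> sin_cos_sqrt[of \<theta>] sin_ge_zero[of \<theta>] by simp
  show "0 \<le> arccos_over_sin c"
    using \<theta> sin_ge_zero[of \<theta>] by (simp add: arccos_over_sin_def sin \<theta>_def[symmetric])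
  show "arccos_over_sin c \<le> pi / 2"
  proof (cases "\<theta> = 0")
    case False
    then have "0 < sin \<theta>" using \<theta> by (intro sin_gt_zero) auto
    then show ?thesis
      using Jordan_inequality[OF \<theta>(1,2)]
      by (simp add: arccos_over_sin_def sin \<theta>_def[symmetric] field_simps)
  qed (simp add: arccos_over_sin_def \<theta>_def[symmetric])
qed

section \<open>Skew-symmetric matrices\<close>

lemma skew_symmetric_transpose_mult:
  assumes "skew_symmetric B"
  shows "(transpose B ** B) *v x = - (B *v (B *v x))"
  using assms
  by (simp add: skew_symmetric_def matrix_vector_mul_assoc[symmetric] matrix_vector_mult_uminus
      del: transpose_matrix_vector)

lemma skew_symmetric_commute_transpose_mult:
  assumes "skew_symmetric B" "\<And>x. F *v (B *v x) = B *v (F *v x)"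
  shows "F *v ((transpose B ** B) *v x) = (transpose B ** B) *v (F *v x)"
  using assms by (simp add: skew_symmetric_transpose_mult vec.neg)

lemma skew_symmetric_norm_eigenvector:
  assumes "skew_symmetric B" "(transpose B ** B) *v y = \<mu> *\<^sub>R y"
  shows "(norm (B *v y))\<^sup>2 = \<mu> * (norm y)\<^sup>2" "norm (B *v y) = sqrt \<mu> * norm y"
    and "y \<noteq> 0 \<Longrightarrow> 0 \<le> \<mu>"
proof -
  have "B *v (B *v y) = - (\<mu> *\<^sub>R y)"
    using assms by (simp add: skew_symmetric_transpose_mult flip: minus_equation_iff)
  then show sq: "(norm (B *v y))\<^sup>2 = \<mu> * (norm y)\<^sup>2"
    using skew_symmetric_inner[OF assms(1), of y "B *v y"] by (simp add: power2_norm_eq_inner)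
  show "y \<noteq> 0 \<Longrightarrow> 0 \<le> \<mu>"
    using sq by (metis zero_le_power2 zero_le_mult_iff zero_less_power2 norm_eq_zero not_less)
  have "norm (B *v y) = sqrt ((norm (B *v y))\<^sup>2)" by simp
  then show "norm (B *v y) = sqrt \<mu> * norm y" by (simp add: sq real_sqrt_mult)
qed

(* For mu = 0 the division by zero makes u = 0; the equations still hold since then B y = 0. *)
lemma skew_symmetric_eigenvector_rotation_pair:
  assumes skew: "skew_symmetric B" and y: "(transpose B ** B) *v y = \<mu> *\<^sub>R y"
  defines "u \<equiv> (1 / sqrt \<mu>) *\<^sub>R (B *v y)"
  shows "B *v y = sqrt \<mu> *\<^sub>R u" "B *v u = (- sqrt \<mu>) *\<^sub>R y" "y \<bullet> u = 0"
    and "0 < \<mu> \<Longrightarrow> norm u = norm y"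
proof -
  have BBy: "B *v (B *v y) = - (\<mu> *\<^sub>R y)"
    using y by (simp add: skew_symmetric_transpose_mult[OF skew] flip: minus_equation_iff)
  note norms = skew_symmetric_norm_eigenvector[OF skew y]
  show "B *v y = sqrt \<mu> *\<^sub>R u"
    using norms(2) by (cases "\<mu> = 0") (simp_all add: u_def)
  show "B *v u = (- sqrt \<mu>) *\<^sub>R y"
  proof (cases "y = 0")
    case False
    then have "0 \<le> \<mu>" by (rule norms(3))
    then show ?thesis
      by (cases "\<mu> = 0") (simp_all add: u_def matrix_vector_mult_scaleR BBy real_div_sqrt)
  qed (simp add: u_def)
  show "y \<bullet> u = 0" using skew_symmetric_inner_self[OF skew, of y] by (simp add: u_def)
  show "0 < \<mu> \<Longrightarrow> norm u = norm y" using norms(2) by (simp add: u_def)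
qed

lemma norm_Re_Im_combination:
  assumes "y \<bullet> u = 0" "norm u = norm y"
  shows "norm (Re w *\<^sub>R y + Im w *\<^sub>R u) = cmod w * norm y"
proof -
  have "orthogonal (Re w *\<^sub>R y) (Im w *\<^sub>R u)" using assms(1) by (simp add: orthogonal_def)
  note pythagoras = norm_add_Pythagorean[OF this]
  have "(norm (Re w *\<^sub>R y + Im w *\<^sub>R u))\<^sup>2 = (cmod w * norm y)\<^sup>2"
    using pythagoras assms(2) by (simp add: power_mult_distrib cmod_power2 algebra_simps)
  then show ?thesis by (simp add: power2_eq_iff_nonneg)
qed

lemma skew_symmetric_eigenvector_norms:
  assumes skew: "skew_symmetric B" and y: "(transpose B ** B) *v y = \<mu> *\<^sub>R y"
  defines "s \<equiv> sqrt \<mu>"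
  shows "norm ((mexp B - mat 1) *v y) = cmod (exp (\<i> * of_real s) - 1) * norm y"
    and "norm (Jmat B *v y) = cmod (exprel (\<i> * of_real s)) * norm y"
proof -
  define u where "u = (1 / sqrt \<mu>) *\<^sub>R (B *v y)"
  note pair = skew_symmetric_eigenvector_rotation_pair[OF skew y, folded u_def s_def]
  have R: "(mexp B - mat 1) *v y
      = Re (exp (\<i> * of_real s) - 1) *\<^sub>R y + Im (exp (\<i> * of_real s) - 1) *\<^sub>R u"
    using mexp_rotation_pair[OF pair(1,2)]
    by (simp add: matrix_vector_mult_diff_rdistrib exp_Euler cos_of_real sin_of_real scaleR_diff_left)
  have J: "Jmat B *v y = Re (exprel (\<i> * of_real s)) *\<^sub>R y + Im (exprel (\<i> * of_real s)) *\<^sub>R u"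
    by (rule Jmat_rotation_pair[OF pair(1,2)])
  consider "y = 0" | "\<mu> = 0" | "0 < \<mu>"
    using skew_symmetric_norm_eigenvector(3)[OF skew y] by fastforce
  then have "norm ((mexp B - mat 1) *v y) = cmod (exp (\<i> * of_real s) - 1) * norm y \<and>
      norm (Jmat B *v y) = cmod (exprel (\<i> * of_real s)) * norm y"
  proof cases
    case 2
    then show ?thesis using R J by (simp add: s_def u_def exprel_def)
  next
    case 3
    then show ?thesis by (simp only: R J norm_Re_Im_combination[OF pair(3) pair(4)[OF 3]])
  qed simp
  then show "norm ((mexp B - mat 1) *v y) = cmod (exp (\<i> * of_real s) - 1) * norm y"
    and "norm (Jmat B *v y) = cmod (exprel (\<i> * of_real s)) * norm y"
    by simp_all
qed

section \<open>Logarithms of rotations close to the identity\<close>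

definition symmetric_part :: "real^'n^'n \<Rightarrow> real^'n^'n" where
  "symmetric_part R = (1 / 2) *\<^sub>R (R + transpose R)"

definition skew_part :: "real^'n^'n \<Rightarrow> real^'n^'n" where
  "skew_part R = (1 / 2) *\<^sub>R (R - transpose R)"

lemma symmetric_part_apply: "symmetric_part R *v x = (1 / 2) *\<^sub>R (R *v x + transpose R *v x)"
  by (simp add: symmetric_part_def scaleR_matrix_vector_assoc[symmetric] matrix_vector_mult_add_rdistrib
      del: transpose_matrix_vector)

lemma skew_part_apply: "skew_part R *v x = (1 / 2) *\<^sub>R (R *v x - transpose R *v x)"
  by (simp add: skew_part_def scaleR_matrix_vector_assoc[symmetric] matrix_vector_mult_diff_rdistrib
      del: transpose_matrix_vector)

lemma transpose_symmetric_part: "transpose (symmetric_part R) = symmetric_part R"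
  by (simp add: symmetric_part_def transpose_def vec_eq_iff add.commute)

lemma skew_symmetric_skew_part: "skew_symmetric (skew_part R)"
  by (simp add: skew_symmetric_def skew_part_def transpose_def vec_eq_iff algebra_simps)

lemma symmetric_part_add_skew_part: "symmetric_part R *v x + skew_part R *v x = R *v x"
  by (simp add: symmetric_part_apply skew_part_apply vec_eq_iff algebra_simps del: transpose_matrix_vector)

context
  fixes R :: "real^'n^'n"
  assumes orth: "orthogonal_matrix R"
begin

lemma orthogonal_matrix_apply_transpose:
  "R *v (transpose R *v x) = x" "transpose R *v (R *v x) = x"
  using orth by (simp_all add: orthogonal_matrix_def matrix_vector_mul_assoc del: transpose_matrix_vector)

lemma norm_orthogonal_matrix_apply: "norm (R *v x) = norm x" "norm (transpose R *v x) = norm x"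
proof -
  have "(R *v x) \<bullet> (R *v x) = x \<bullet> x" "(transpose R *v x) \<bullet> (transpose R *v x) = x \<bullet> x"
    using inner_transpose_matrix_vector[of R x "transpose R *v x"]
      inner_transpose_matrix_vector[of R "R *v x" x]
    by (simp_all add: orthogonal_matrix_apply_transpose inner_commute del: transpose_matrix_vector)
  then show "norm (R *v x) = norm x" "norm (transpose R *v x) = norm x"
    by (simp_all add: norm_eq_sqrt_inner)
qed

lemma symmetric_part_skew_part_commute:
  "symmetric_part R *v (skew_part R *v x) = skew_part R *v (symmetric_part R *v x)"
  by (simp add: symmetric_part_apply skew_part_apply matrix_vector_mult_scaleR matrix_vector_right_distrib
      matrix_vector_mult_diff_distrib orthogonal_matrix_apply_transpose algebra_simps
      del: transpose_matrix_vector)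

lemma skew_part_square:
  "skew_part R *v (skew_part R *v x) = symmetric_part R *v (symmetric_part R *v x) - x"
  by (simp add: symmetric_part_apply skew_part_apply matrix_vector_mult_scaleR matrix_vector_right_distrib
      matrix_vector_mult_diff_distrib orthogonal_matrix_apply_transpose algebra_simps
      del: transpose_matrix_vector) (simp add: vec_eq_iff)

lemma norm_skew_part_le: "norm (skew_part R *v x) \<le> norm x"
proof -
  have "norm (R *v x - transpose R *v x) \<le> norm (R *v x) + norm (transpose R *v x)"
    by (rule norm_triangle_ineq4)
  then show ?thesis
    by (simp add: skew_part_apply norm_orthogonal_matrix_apply del: transpose_matrix_vector)
qed

end

lemma orthogonal_mexp_rotation_pair_parts:
  assumes orth: "orthogonal_matrix (mexp B)" and pair: "B *v y = s *\<^sub>R u" "B *v u = (- s) *\<^sub>R y"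
  shows "symmetric_part (mexp B) *v y = cos s *\<^sub>R y" "skew_part (mexp B) *v y = sin s *\<^sub>R u"
proof -
  let ?R = "mexp B"
  have Ry: "?R *v y = cos s *\<^sub>R y + sin s *\<^sub>R u" by (rule mexp_rotation_pair[OF pair])
  have pair': "B *v u = s *\<^sub>R (- y)" "B *v (- y) = (- s) *\<^sub>R u" using pair by (simp_all add: vec.neg)
  have Ru: "?R *v u = cos s *\<^sub>R u - sin s *\<^sub>R y" using mexp_rotation_pair[OF pair'] by simp
  have "?R *v (cos s *\<^sub>R y - sin s *\<^sub>R u) = y"
    by (simp add: matrix_vector_mult_diff_distrib matrix_vector_mult_scaleR Ry Ru algebra_simps)
      (simp only: scaleR_add_left[symmetric] sin_cos_squared_add3 scaleR_one)
  then have "transpose ?R *v y = cos s *\<^sub>R y - sin s *\<^sub>R u"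
    by (metis orthogonal_matrix_apply_transpose(2)[OF orth])
  then show "symmetric_part ?R *v y = cos s *\<^sub>R y" "skew_part ?R *v y = sin s *\<^sub>R u"
    by (simp_all add: symmetric_part_apply skew_part_apply Ry vec_eq_iff del: transpose_matrix_vector)
qed

(* With C = symmetric_part R and K = skew_part R: on the plane spanned by v and K v, where
   C v = cos t v, this is (t / sin t) K, the generator of the rotation by t. *)
definition rotation_log :: "real^'n^'n \<Rightarrow> (real^'n) set \<Rightarrow> real^'n^'n" where
  "rotation_log R T = skew_part R ** spectral_fun arccos_over_sin (symmetric_part R) T"

definition principal_log :: "real^'n^'n \<Rightarrow> real^'n^'n \<Rightarrow> bool" where
  "principal_log B R \<longleftrightarrow> skew_symmetric B \<and> (\<forall>z. is_eigenvalue B z \<longrightarrow> cmod z < pi) \<and> mexp B = R"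

context
  fixes B R :: "real^'n^'n"
  assumes log: "principal_log B R" and near: "opnorm2 (R - mat 1) < sqrt 2"
begin

lemma principal_log_skew: "skew_symmetric B"
  using log by (simp add: principal_log_def)

lemma principal_log_exp: "mexp B = R"
  using log by (simp add: principal_log_def)

(* The eigenvalue i s of B gives s < pi, and then |exp (i s) - 1| = 2 sin (s/2) < sqrt 2 forces
   s < pi/2. *)
lemma principal_log_angle_less_pi_half:
  assumes y: "(transpose B ** B) *v y = \<mu> *\<^sub>R y" "y \<noteq> 0"
  shows "sqrt \<mu> < pi / 2"
proof -
  define s where "s = sqrt \<mu>"
  have "0 \<le> s" using skew_symmetric_norm_eigenvector(3)[OF principal_log_skew y] by (simp add: s_def)
  note pair = skew_symmetric_eigenvector_rotation_pair[OF principal_log_skew y(1), folded s_def]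
  have "is_eigenvalue B (\<i> * of_real s)" using is_eigenvalue_rotation_pair[OF pair(1,2) y(2)] .
  then have "s < pi" using log \<open>0 \<le> s\<close> by (auto simp: principal_log_def norm_mult)
  have "cmod (exp (\<i> * of_real s) - 1) * norm y = norm ((R - mat 1) *v y)"
    using skew_symmetric_eigenvector_norms(1)[OF principal_log_skew y(1)] principal_log_exp
    by (simp add: s_def)
  also have "\<dots> < sqrt 2 * norm y"
    using norm_matrix_vector_le_opnorm2[of "R - mat 1" y] near y(2)
    by (meson le_less_trans mult_strict_right_mono zero_less_norm_iff)
  finally have "2 * \<bar>sin (s / 2)\<bar> < sqrt 2" using y(2) by (simp add: dist_exp_i_1)
  then have "sin (s / 2) < sin (pi / 4)" by (simp add: sin_45)
  moreover have "sin (pi / 4) \<le> sin (s / 2)" if "pi / 2 \<le> s"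
    using that \<open>s < pi\<close> by (intro sin_monotone_2pi_le) auto
  ultimately show ?thesis unfolding s_def[symmetric] by linarith
qed

lemma principal_log_norm_le_of_eigenvectors:
  assumes F: "\<And>x. F *v (B *v x) = B *v (F *v x)" and G: "\<And>x. G *v (B *v x) = B *v (G *v x)"
    and c: "0 \<le> c"
    and eigen: "\<And>y s. (transpose B ** B) *v y = s\<^sup>2 *\<^sub>R y \<Longrightarrow> 0 \<le> s \<Longrightarrow> s < pi / 2 \<Longrightarrow>
      norm (F *v y) \<le> c * norm (G *v y)"
  shows "norm (F *v x) \<le> c * norm (G *v x)"
proof (rule norm_le_of_commuting_symmetric[OF _ c])
  show "transpose (transpose B ** B) = transpose B ** B" by (simp add: matrix_transpose_mul)
  show "F *v ((transpose B ** B) *v x) = (transpose B ** B) *v (F *v x)"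
    and "G *v ((transpose B ** B) *v x) = (transpose B ** B) *v (G *v x)" for x
    using F G by (simp_all add: skew_symmetric_commute_transpose_mult[OF principal_log_skew])
  show "norm (F *v y) \<le> c * norm (G *v y)" if y: "(transpose B ** B) *v y = \<mu> *\<^sub>R y" for y \<mu>
  proof (cases "y = 0")
    case False
    then have "0 \<le> \<mu>" by (rule skew_symmetric_norm_eigenvector(3)[OF principal_log_skew y])
    then show ?thesis
      using y principal_log_angle_less_pi_half[OF y False] by (intro eigen[of y "sqrt \<mu>"]) auto
  qed simp
qed

lemma principal_log_commute_R_minus_1: "(R - mat 1) *v (B *v x) = B *v ((R - mat 1) *v x)"
  using mexp_apply_commute[of B] principal_log_exp
  by (simp add: matrix_vector_mult_diff_rdistrib matrix_vector_mult_diff_distrib)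

lemma principal_log_eigenvector_norms:
  assumes "(transpose B ** B) *v y = s\<^sup>2 *\<^sub>R y" "0 \<le> s"
  shows "norm ((R - mat 1) *v y) = cmod (exp (\<i> * of_real s) - 1) * norm y"
    and "norm (B *v y) = s * norm y"
    and "norm (Jmat B *v y) = cmod (exprel (\<i> * of_real s)) * norm y"
  using skew_symmetric_eigenvector_norms[OF principal_log_skew assms(1)]
    skew_symmetric_norm_eigenvector(2)[OF principal_log_skew assms(1)] principal_log_exp assms(2)
  by simp_all

lemma principal_log_norm_R_minus_1_le: "norm ((R - mat 1) *v x) \<le> norm (B *v x)"
proof -
  have "norm ((R - mat 1) *v x) \<le> 1 * norm (B *v x)"
  proof (rule principal_log_norm_le_of_eigenvectors[OF principal_log_commute_R_minus_1])
    fix y s assume y: "(transpose B ** B) *v y = s\<^sup>2 *\<^sub>R y" and s: "0 \<le> s"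
    have "cmod (exp (\<i> * of_real s) - 1) * norm y \<le> s * norm y"
      using norm_exp_i_minus_1_le[of s] s by (simp add: mult_right_mono)
    then show "norm ((R - mat 1) *v y) \<le> 1 * norm (B *v y)"
      by (simp add: principal_log_eigenvector_norms[OF y s])
  qed simp_all
  then show ?thesis by simp
qed

lemma principal_log_norm_le_R_minus_1: "norm (B *v x) \<le> pi / 2 * norm ((R - mat 1) *v x)"
proof (rule principal_log_norm_le_of_eigenvectors[OF _ principal_log_commute_R_minus_1])
  fix y s assume y: "(transpose B ** B) *v y = s\<^sup>2 *\<^sub>R y" and s: "0 \<le> s" "s < pi / 2"
  have "s * norm y \<le> (pi / 2 * cmod (exp (\<i> * of_real s) - 1)) * norm y"
    using norm_exp_i_minus_1_ge[OF s(1)] s(2) pi_gt_zero by (intro mult_right_mono) auto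
  then show "norm (B *v y) \<le> pi / 2 * norm ((R - mat 1) *v y)"
    by (simp add: principal_log_eigenvector_norms[OF y s(1)] mult.assoc)
qed simp_all

lemma principal_log_norm_le: "norm (B *v x) \<le> pi / 2 * norm x"
proof -
  have "norm (B *v x) \<le> pi / 2 * norm (mat 1 *v x)"
  proof (rule principal_log_norm_le_of_eigenvectors)
    fix y s assume y: "(transpose B ** B) *v y = s\<^sup>2 *\<^sub>R y" and s: "0 \<le> s" "s < pi / 2"
    then have "s * norm y \<le> pi / 2 * norm y" by (intro mult_right_mono) auto
    then show "norm (B *v y) \<le> pi / 2 * norm (mat 1 *v y)"
      by (simp add: principal_log_eigenvector_norms[OF y s(1)])
  qed simp_all
  then show ?thesis by simp
qed

lemma principal_log_norm_Jmat_le: "norm (Jmat B *v x) \<le> norm x"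
proof -
  have "norm (Jmat B *v x) \<le> 1 * norm (mat 1 *v x)"
  proof (rule principal_log_norm_le_of_eigenvectors[OF Jmat_apply_commute])
    fix y s assume y: "(transpose B ** B) *v y = s\<^sup>2 *\<^sub>R y" and s: "0 \<le> s"
    show "norm (Jmat B *v y) \<le> 1 * norm (mat 1 *v y)"
      using norm_exprel_i_le_1[of s]
      by (simp add: principal_log_eigenvector_norms[OF y s] mult_left_le_one_le)
  qed simp_all
  then show ?thesis by simp
qed

lemma principal_log_norm_le_Jmat: "norm x \<le> pi / 2 * norm (Jmat B *v x)"
proof -
  have "norm (mat 1 *v x) \<le> pi / 2 * norm (Jmat B *v x)"
  proof (rule principal_log_norm_le_of_eigenvectors[OF _ Jmat_apply_commute])
    fix y s assume y: "(transpose B ** B) *v y = s\<^sup>2 *\<^sub>R y" and s: "0 \<le> s" "s < pi / 2"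
    have "1 * norm y \<le> (pi / 2 * cmod (exprel (\<i> * of_real s))) * norm y"
      using norm_exprel_i_ge[OF s(1)] s(2) pi_gt_zero by (intro mult_right_mono) auto
    then show "norm (mat 1 *v y) \<le> pi / 2 * norm (Jmat B *v y)"
      by (simp add: principal_log_eigenvector_norms[OF y s(1)] mult.assoc)
  qed simp_all
  then show ?thesis by simp
qed

lemma principal_log_opnorm2_bounds:
  "opnorm2 (R - mat 1) \<le> opnorm2 B" "opnorm2 B \<le> pi / 2 * opnorm2 (R - mat 1)" "opnorm2 B \<le> pi / 2"
proof -
  show "opnorm2 (R - mat 1) \<le> opnorm2 B" "opnorm2 B \<le> pi / 2 * opnorm2 (R - mat 1)"
    using opnorm2_le_pointwise[of 1 "R - mat 1" B] opnorm2_le_pointwise[of "pi / 2" B "R - mat 1"]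
      principal_log_norm_R_minus_1_le principal_log_norm_le_R_minus_1 by simp_all
  show "opnorm2 B \<le> pi / 2" using principal_log_norm_le by (intro opnorm2_le) auto
qed

lemma principal_log_Jmat_invertible: "invertible (Jmat B)"
proof -
  have "x = 0" if "Jmat B *v x = 0" for x
    using principal_log_norm_le_Jmat[of x] that by simp
  then have "inj ((*v) (Jmat B))" unfolding vec.inj_iff_eq_0 by blast
  then show ?thesis using matrix_left_invertible_injective invertible_left_inverse by blast
qed

lemma principal_log_Jmat_inverse_bounds:
  "norm \<tau> \<le> norm (matrix_inv (Jmat B) *v \<tau>)" "norm (matrix_inv (Jmat B) *v \<tau>) \<le> pi / 2 * norm \<tau>"
proof -
  have "Jmat B *v (matrix_inv (Jmat B) *v \<tau>) = \<tau>"
    by (simp add: matrix_vector_mul_assoc matrix_inv_right[OF principal_log_Jmat_invertible])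
  then show "norm \<tau> \<le> norm (matrix_inv (Jmat B) *v \<tau>)"
    and "norm (matrix_inv (Jmat B) *v \<tau>) \<le> pi / 2 * norm \<tau>"
    using principal_log_norm_Jmat_le[of "matrix_inv (Jmat B) *v \<tau>"]
      principal_log_norm_le_Jmat[of "matrix_inv (Jmat B) *v \<tau>"] by simp_all
qed

lemma principal_log_eq_rotation_log:
  assumes orth: "orthogonal_matrix R" and T: "orthonormal_eigenbasis (symmetric_part R) T"
  shows "B = rotation_log R T"
proof -
  have "transpose (transpose B ** B) = transpose B ** B" by (simp add: matrix_transpose_mul)
  then obtain T' where T': "orthonormal_eigenbasis (transpose B ** B) T'"
    using symmetric_matrix_orthonormal_eigenbasis by blast
  show ?thesis
  proof (rule orthonormal_eigenbasis_matrix_eq[OF T'])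
    fix y assume "y \<in> T'"
    then have y: "(transpose B ** B) *v y = (y \<bullet> ((transpose B ** B) *v y)) *\<^sub>R y" "y \<noteq> 0"
      using T' by (auto simp: orthonormal_eigenbasis_def)
    define s where "s = sqrt (y \<bullet> ((transpose B ** B) *v y))"
    define u where "u = (1 / s) *\<^sub>R (B *v y)"
    note pair = skew_symmetric_eigenvector_rotation_pair[OF principal_log_skew y(1), folded s_def u_def]
    have s: "0 \<le> s" "s < pi / 2"
      using skew_symmetric_norm_eigenvector(3)[OF principal_log_skew y]
        principal_log_angle_less_pi_half[OF y]
      by (simp_all add: s_def)
    have parts: "symmetric_part R *v y = cos s *\<^sub>R y" "skew_part R *v y = sin s *\<^sub>R u"
      using orthogonal_mexp_rotation_pair_parts[OF _ pair(1,2)] orth principal_log_exp by simp_all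
    have "rotation_log R T *v y = skew_part R *v (arccos_over_sin (cos s) *\<^sub>R y)"
      unfolding rotation_log_def matrix_vector_mul_assoc[symmetric]
      using spectral_fun_eigenvector[OF T transpose_symmetric_part parts(1)] by simp
    also have "\<dots> = (arccos_over_sin (cos s) * sin s) *\<^sub>R u"
      by (simp add: matrix_vector_mult_scaleR parts(2))
    also have "\<dots> = B *v y"
      using s by (simp add: arccos_over_sin_cos pair(1))
    finally show "B *v y = rotation_log R T *v y" ..
  qed
qed

end

context
  fixes R :: "real^'n^'n" and T :: "(real^'n) set"
  assumes orth: "orthogonal_matrix R" and near: "opnorm2 (R - mat 1) < sqrt 2"
    and T: "orthonormal_eigenbasis (symmetric_part R) T"
begin

lemma rotation_cos_bounds:
  assumes "v \<in> T"
  shows "0 < v \<bullet> (symmetric_part R *v v)" "v \<bullet> (symmetric_part R *v v) \<le> 1"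
proof -
  have v: "norm v = 1" using T assms by (simp add: orthonormal_eigenbasis_def)
  have c: "v \<bullet> (symmetric_part R *v v) = v \<bullet> (R *v v)"
    using inner_transpose_matrix_vector[of R v v]
    by (simp add: symmetric_part_apply inner_add_right inner_commute del: transpose_matrix_vector)
  have "v \<bullet> (R *v v) \<le> norm v * norm (R *v v)" by (rule norm_cauchy_schwarz)
  then show "v \<bullet> (symmetric_part R *v v) \<le> 1"
    using v c by (simp add: norm_orthogonal_matrix_apply[OF orth])
  have "(norm ((R - mat 1) *v v))\<^sup>2 = 2 - 2 * (v \<bullet> (R *v v))"
    using v norm_orthogonal_matrix_apply(1)[OF orth, of v]
    by (simp add: matrix_vector_mult_diff_rdistrib power2_norm_eq_inner inner_diff_left
        inner_diff_right inner_commute) (simp add: dot_square_norm)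
  moreover have "norm ((R - mat 1) *v v) < sqrt 2"
    using norm_matrix_vector_le_opnorm2[of "R - mat 1" v] near v by simp
  then have "(norm ((R - mat 1) *v v))\<^sup>2 < 2"
    by (metis norm_ge_zero power_strict_mono real_sqrt_pow2 zero_le_numeral zero_less_numeral pos2)
  ultimately show "0 < v \<bullet> (symmetric_part R *v v)" using c by simp
qed

lemma symmetric_part_basis: "v \<in> T \<Longrightarrow> symmetric_part R *v v = (v \<bullet> (symmetric_part R *v v)) *\<^sub>R v"
  using T by (simp add: orthonormal_eigenbasis_def)

lemma spectral_fun_skew_part_basis:
  assumes "v \<in> T"
  shows "spectral_fun f (symmetric_part R) T *v v = f (v \<bullet> (symmetric_part R *v v)) *\<^sub>R v"
    and "spectral_fun f (symmetric_part R) T *v (skew_part R *v v) =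
      f (v \<bullet> (symmetric_part R *v v)) *\<^sub>R (skew_part R *v v)"
proof -
  define c where "c = v \<bullet> (symmetric_part R *v v)"
  have Cv: "symmetric_part R *v v = c *\<^sub>R v" unfolding c_def by (rule symmetric_part_basis[OF assms])
  moreover have "symmetric_part R *v (skew_part R *v v) = c *\<^sub>R (skew_part R *v v)"
    by (simp add: symmetric_part_skew_part_commute[OF orth] Cv matrix_vector_mult_scaleR)
  ultimately show "spectral_fun f (symmetric_part R) T *v v = f (v \<bullet> (symmetric_part R *v v)) *\<^sub>R v"
    and "spectral_fun f (symmetric_part R) T *v (skew_part R *v v) =
      f (v \<bullet> (symmetric_part R *v v)) *\<^sub>R (skew_part R *v v)"
    unfolding c_def[symmetric] by (simp_all add: spectral_fun_eigenvector[OF T transpose_symmetric_part])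
qed

lemma rotation_log_basis:
  "v \<in> T \<Longrightarrow> rotation_log R T *v v = arccos_over_sin (v \<bullet> (symmetric_part R *v v)) *\<^sub>R (skew_part R *v v)"
  by (simp add: rotation_log_def matrix_vector_mul_assoc[symmetric] spectral_fun_skew_part_basis
      matrix_vector_mult_scaleR)

lemma skew_symmetric_rotation_log: "skew_symmetric (rotation_log R T)"
proof -
  let ?H = "spectral_fun arccos_over_sin (symmetric_part R) T"
  have "?H ** skew_part R = skew_part R ** ?H"
    by (rule orthonormal_eigenbasis_matrix_eq[OF T])
      (simp add: matrix_vector_mul_assoc[symmetric] spectral_fun_skew_part_basis matrix_vector_mult_scaleR)
  moreover have "?H ** (- skew_part R) = - (?H ** skew_part R)"
    by (simp add: matrix_eq matrix_vector_mul_assoc[symmetric] matrix_vector_mult_uminus vec.neg)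
  ultimately show ?thesis
    using skew_symmetric_skew_part[of R]
    by (simp add: skew_symmetric_def rotation_log_def matrix_transpose_mul transpose_spectral_fun)
qed

lemma rotation_log_square_basis:
  assumes v: "v \<in> T"
  shows "rotation_log R T *v (rotation_log R T *v v)
    = - ((arccos (v \<bullet> (symmetric_part R *v v)))\<^sup>2 *\<^sub>R v)"
proof -
  define c where "c = v \<bullet> (symmetric_part R *v v)"
  have c: "0 < c" "c \<le> 1" using rotation_cos_bounds[OF v] by (simp_all add: c_def)
  have Cv: "symmetric_part R *v v = c *\<^sub>R v" unfolding c_def by (rule symmetric_part_basis[OF v])
  have KK: "skew_part R *v (skew_part R *v v) = (c\<^sup>2 - 1) *\<^sub>R v"
    by (simp add: skew_part_square[OF orth] Cv matrix_vector_mult_scaleR power2_eq_square scaleR_diff_left)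
  have "rotation_log R T *v (rotation_log R T *v v) = ((arccos_over_sin c)\<^sup>2 * (c\<^sup>2 - 1)) *\<^sub>R v"
    by (simp add: rotation_log_def matrix_vector_mul_assoc[symmetric] spectral_fun_skew_part_basis[OF v]
        matrix_vector_mult_scaleR KK power2_eq_square flip: c_def)
  also have "(arccos_over_sin c)\<^sup>2 * (c\<^sup>2 - 1) = - (arccos c)\<^sup>2"
  proof (cases "c = 1")
    case False
    then have "0 < 1 - c\<^sup>2" using c by (simp add: abs_square_less_1)
    then show ?thesis by (simp add: arccos_over_sin_def power_divide field_simps)
  qed (simp add: arccos_over_sin_def)
  finally show ?thesis by (simp add: c_def)
qed

lemma mexp_rotation_log_basis:
  assumes v: "v \<in> T"
  shows "mexp (rotation_log R T) *v v = R *v v"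
proof -
  let ?L = "rotation_log R T"
  define c where "c = v \<bullet> (symmetric_part R *v v)"
  define \<theta> where "\<theta> = arccos c"
  have c: "0 < c" "c \<le> 1" using rotation_cos_bounds[OF v] by (simp_all add: c_def)
  have \<theta>: "0 \<le> \<theta>" "\<theta> \<le> pi / 2" "cos \<theta> = c"
    using c arccos_le_pi2[of c] by (auto simp: \<theta>_def intro: arccos_lbound)
  then have "\<theta> < pi / 2" using c(1) by (metis cos_pi_half order_less_le order_less_irrefl)
  have Cv: "symmetric_part R *v v = c *\<^sub>R v" unfolding c_def by (rule symmetric_part_basis[OF v])
  have Lv: "?L *v v = arccos_over_sin c *\<^sub>R (skew_part R *v v)"
    unfolding c_def by (rule rotation_log_basis[OF v])
  have "(transpose ?L ** ?L) *v v = \<theta>\<^sup>2 *\<^sub>R v"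
    using rotation_log_square_basis[OF v]
    by (simp add: skew_symmetric_transpose_mult[OF skew_symmetric_rotation_log] \<theta>_def c_def)
  from skew_symmetric_eigenvector_rotation_pair[OF skew_symmetric_rotation_log this]
  obtain u where pair: "?L *v v = \<theta> *\<^sub>R u" "?L *v u = (- \<theta>) *\<^sub>R v" and u: "u = (1 / \<theta>) *\<^sub>R (?L *v v)"
    using \<theta>(1) by simp
  have "sin \<theta> *\<^sub>R u = skew_part R *v v"
  proof (cases "\<theta> = 0")
    case True
    then have "c = 1" using \<theta>(3) by simp
    then have "skew_part R *v (skew_part R *v v) = 0"
      by (simp add: skew_part_square[OF orth] Cv)
    then have "skew_part R *v v = 0"
      using skew_symmetric_inner[OF skew_symmetric_skew_part[of R], of v "skew_part R *v v"] by simp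
    then show ?thesis using True by simp
  next
    case False
    have "\<theta> < pi" using \<open>\<theta> < pi / 2\<close> pi_gt_zero by linarith
    then have "sin \<theta> * arccos_over_sin c = \<theta>"
      using arccos_over_sin_cos[OF \<theta>(1)] \<theta>(3) by (simp add: mult.commute)
    then show ?thesis using False by (simp add: u Lv)
  qed
  then have "mexp ?L *v v = symmetric_part R *v v + skew_part R *v v"
    using mexp_rotation_pair[OF pair] \<theta>(3) Cv by simp
  then show ?thesis by (simp add: symmetric_part_add_skew_part)
qed

lemma mexp_rotation_log: "mexp (rotation_log R T) = R"
  by (rule orthonormal_eigenbasis_matrix_eq[OF T mexp_rotation_log_basis])

lemma norm_rotation_log_le: "norm (rotation_log R T *v x) \<le> pi / 2 * norm x"
proof -
  have "norm (rotation_log R T *v x) \<le> norm (spectral_fun arccos_over_sin (symmetric_part R) T *v x)"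
    unfolding rotation_log_def matrix_vector_mul_assoc[symmetric] by (rule norm_skew_part_le[OF orth])
  also have "\<dots> \<le> pi / 2 * norm x"
    using rotation_cos_bounds arccos_over_sin_bounds
    by (intro norm_spectral_fun_le[OF T]) (simp add: less_imp_le)
  finally show ?thesis .
qed

theorem principal_log_rotation_log: "principal_log (rotation_log R T) R"
proof -
  have "opnorm2 (rotation_log R T) \<le> pi / 2"
    using norm_rotation_log_le by (intro opnorm2_le) auto
  then have "cmod z < pi" if "is_eigenvalue (rotation_log R T) z" for z
    using is_eigenvalue_cmod_le_opnorm2[OF that] pi_gt_zero by linarith
  then show ?thesis
    by (simp add: principal_log_def skew_symmetric_rotation_log mexp_rotation_log)
qed

end


theorem mainTheorem11:
  fixes \<tau> :: "real^'d" and R :: "real^'d^'d"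
  assumes "orthogonal_matrix R"
    and "opnorm2 (R - mat 1) < sqrt 2"
  shows "(\<exists>!B. skew_symmetric B \<and> (\<forall>z. is_eigenvalue B z \<longrightarrow> cmod z < pi) \<and> mexp B = R)
    \<and> (\<forall>B. skew_symmetric B \<and> (\<forall>z. is_eigenvalue B z \<longrightarrow> cmod z < pi) \<and> mexp B = R \<longrightarrow>
          opnorm2 B \<le> pi / 2
        \<and> invertible (Jmat B)
        \<and> (let \<tau>0' = matrix_inv (Jmat B) *v \<tau> in
             opnorm2 (R - mat 1) + norm \<tau> \<le> opnorm2 B + norm \<tau>0'
           \<and> opnorm2 B + norm \<tau>0' \<le> pi / 2 * (opnorm2 (R - mat 1) + norm \<tau>)))"
proof -
  obtain T where T: "orthonormal_eigenbasis (symmetric_part R) T"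
    using symmetric_matrix_orthonormal_eigenbasis[OF transpose_symmetric_part] .
  have "\<exists>!B. principal_log B R"
    using principal_log_rotation_log[OF assms T] principal_log_eq_rotation_log[OF _ assms(2,1) T] by blast
  moreover have "opnorm2 B \<le> pi / 2 \<and> invertible (Jmat B) \<and>
      (let \<tau>0' = matrix_inv (Jmat B) *v \<tau> in
         opnorm2 (R - mat 1) + norm \<tau> \<le> opnorm2 B + norm \<tau>0'
       \<and> opnorm2 B + norm \<tau>0' \<le> pi / 2 * (opnorm2 (R - mat 1) + norm \<tau>))"
    if log: "principal_log B R" for B
    using principal_log_opnorm2_bounds[OF log assms(2)] principal_log_Jmat_invertible[OF log assms(2)]
      principal_log_Jmat_inverse_bounds[OF log assms(2), of \<tau>]
    by (simp add: distrib_left add_mono)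
  ultimately show ?thesis unfolding principal_log_def by blast
qed

end
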